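(* Let $r$ be an $\mathfrak s$-matrix on a pre-Lie algebra $(\mathfrak g,\cdot_{\mathfrak g})$. Then for every $k\ge0$ and $\varphi\in\wedge^k\mathfrak g\otimes\mathfrak g=C^{k+1}_{\mathfrak s}(\mathfrak g)$ we have $\Psi(\delta_{\mathfrak s}\varphi)=\delta_{\mathrm{RB}}(\Psi\varphi)$. Consequently $\Psi$ is an isomorphism of cochain complexes from $(C^{*+1}_{\mathfrak s}(\mathfrak g),\delta_{\mathfrak s})$ to $(\mathcal C^*(\mathfrak g^*,\mathfrak g),\delta_{\mathrm{RB}})$ and induces isomorphisms of the corresponding cohomology groups.
   Context: A pre-Lie algebra is a finite-dimensional vector space $\mathfrak g$ over a field of characteristic $0$ with product $\cdot$ satisfying $(x\cdot y)\cdot z-x\cdot(y\cdot z)=(y\cdot x)\cdot z-y\cdot(x\cdot z)$; $[x,y]_{\mathfrak g}=x\cdot y-y\cdot x$. Define $\langle L^*_x\alpha,y\rangle=-\langle\alpha,x\cdot y\rangle$, $\langle R^*_x\alpha,y\rangle=-\langle\alpha,y\cdot x\rangle$, $\mathrm{ad}^*_x=L^*_x-R^*_x$. For $r\in\mathrm{Sym}^2(\mathfrak g)$, $\langle r^\sharp(\alpha),\beta\rangle=r(\alpha,\beta)$; for $r=\sum_ia_i\otimes b_i$, $[r,r]=-\sum a_i\cdot a_j\otimes b_i\otimes b_j+\sum a_i\otimes b_i\cdot a_j\otimes b_j+\sum a_i\otimes a_j\otimes[b_i,b_j]_{\mathfrak g}$, and $r$ is an $\mathfrak s$-matrix if $[r,r]=0$.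 Set $\alpha\cdot_r\beta=\mathrm{ad}^*_{r^\sharp(\alpha)}\beta-R^*_{r^\sharp(\beta)}\alpha$, $[\alpha,\beta]_r=L^*_{r^\sharp(\alpha)}\beta-L^*_{r^\sharp(\beta)}\alpha$. $C^k_{\mathfrak s}(\mathfrak g)=\wedge^{k-1}\mathfrak g\otimes\mathfrak g$, with $\varphi$ regarded as the $k$-linear map $\varphi(\alpha_1,\dots,\alpha_k)=\langle\varphi,\alpha_1\wedge\dots\wedge\alpha_{k-1}\otimes\alpha_k\rangle$; $\delta_{\mathfrak s}:C^k_{\mathfrak s}\to C^{k+1}_{\mathfrak s}$ is $\delta_{\mathfrak s}\varphi(\alpha_1,\dots,\alpha_{k+1})=-\sum_{i=1}^k(-1)^{i+1}\varphi(\alpha_1,\dots,\widehat{\alpha_i},\dots,\alpha_k,\alpha_i\cdot_r\alpha_{k+1})+\sum_{1\le i<j\le k}(-1)^{i+j}\varphi([\alpha_i,\alpha_j]_r,\alpha_1,\dots,\widehat{\alpha_i},\dots,\widehat{\alpha_j},\dots,\alpha_{k+1})$. $\Psi:\wedge^k\mathfrak g\otimes\mathfrak g\to\mathcal C^k(\mathfrak g^*,\mathfrak g)=\mathrm{Hom}(\wedge^k\mathfrak g^*,\mathfrak g)$ is $\langle\Psi(\varphi)(\alpha_1,\dots,\alpha_k),\alpha_{k+1}\rangle=\langle\varphi,\alpha_1\wedge\dots\wedge\alpha_k\otimes\alpha_{k+1}\rangle$. For $P\in\mathcal C^k(\mathfrak g^*,\mathfrak g)$, $\delta_{\mathrm{RB}}P(\alpha_1,\dots,\alpha_{k+1})=\sum_{i=1}^{k+1}(-1)^{i+1}[r^\sharp(\alpha_i),P(\alpha_1,\dots,\widehat{\alpha_i},\dots,\alpha_{k+1})]_{\mathfrak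 g}+\sum_{i=1}^{k+1}(-1)^{i+1}r^\sharp\big(L^*_{P(\alpha_1,\dots,\widehat{\alpha_i},\dots,\alpha_{k+1})}\alpha_i\big)+\sum_{1\le i<j\le k+1}(-1)^{i+j}P([\alpha_i,\alpha_j]_r,\alpha_1,\dots,\widehat{\alpha_i},\dots,\widehat{\alpha_j},\dots,\alpha_{k+1})$. *)

theory Defs
  imports Main "HOL-Library.Function_Algebras"
begin

text \<open>The pre-Lie algebra g is a finite-dimensional vector space over a field 'k of
characteristic 0, realised in coordinates as 'n \<Rightarrow> 'k with 'n a finite index type
(a basis of g). The dual space g* is realised as 'n \<Rightarrow> 'k via the dual basis; the
duality pairing is pair alpha x = sum of alpha i * x i.\<close>

definition smul :: "'k::times \<Rightarrow> ('n \<Rightarrow> 'k) \<Rightarrow> ('n \<Rightarrow> 'k)" where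
  "smul c x = (\<lambda>i. c * x i)"

definition ebas :: "'n \<Rightarrow> 'n \<Rightarrow> 'k::zero_neq_one" where
  "ebas i = (\<lambda>j. if j = i then 1 else 0)"

definition pair :: "('n::finite \<Rightarrow> 'k::comm_ring_1) \<Rightarrow> ('n \<Rightarrow> 'k) \<Rightarrow> 'k" where
  "pair \<alpha> x = (\<Sum>i\<in>UNIV. \<alpha> i * x i)"

type_synonym ('n, 'k) prod_op = "('n \<Rightarrow> 'k) \<Rightarrow> ('n \<Rightarrow> 'k) \<Rightarrow> ('n \<Rightarrow> 'k)"

definition prelie :: "('n::finite, 'k::field) prod_op \<Rightarrow> bool" where
  "prelie m \<longleftrightarrow>
     (\<forall>x y z. m (x + y) z = m x z + m y z) \<and>
     (\<forall>x y z. m x (y + z) = m x y + m x z) \<and>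
     (\<forall>c x y. m (smul c x) y = smul c (m x y)) \<and>
     (\<forall>c x y. m x (smul c y) = smul c (m x y)) \<and>
     (\<forall>x y z. m (m x y) z - m x (m y z) = m (m y x) z - m y (m x z))"

definition brg :: "('n, 'k::ab_group_add) prod_op \<Rightarrow> ('n, 'k) prod_op" where
  "brg m x y = m x y - m y x"

definition Lstar :: "('n::finite, 'k::comm_ring_1) prod_op \<Rightarrow> ('n \<Rightarrow> 'k) \<Rightarrow> ('n \<Rightarrow> 'k) \<Rightarrow> ('n \<Rightarrow> 'k)" where
  "Lstar m x \<alpha> = (\<lambda>i. - pair \<alpha> (m x (ebas i)))"

definition Rstar :: "('n::finite, 'k::comm_ring_1) prod_op \<Rightarrow> ('n \<Rightarrow> 'k) \<Rightarrow> ('n \<Rightarrow> 'k) \<Rightarrow> ('n \<Rightarrow> 'k)" where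
  "Rstar m x \<alpha> = (\<lambda>i. - pair \<alpha> (m (ebas i) x))"

definition adstar :: "('n::finite, 'k::comm_ring_1) prod_op \<Rightarrow> ('n \<Rightarrow> 'k) \<Rightarrow> ('n \<Rightarrow> 'k) \<Rightarrow> ('n \<Rightarrow> 'k)" where
  "adstar m x \<alpha> = Lstar m x \<alpha> - Rstar m x \<alpha>"

text \<open>A 2-tensor r = sum of a_i \<otimes> b_i in g \<otimes> g, given by the list of pairs (a_i, b_i).\<close>
type_synonym ('n, 'k) tensor2 = "(('n \<Rightarrow> 'k) \<times> ('n \<Rightarrow> 'k)) list"

definition rform :: "('n::finite, 'k::comm_ring_1) tensor2 \<Rightarrow> ('n \<Rightarrow> 'k) \<Rightarrow> ('n \<Rightarrow> 'k) \<Rightarrow> 'k" where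
  "rform r \<alpha> \<beta> = sum_list (map (\<lambda>(a, b). pair \<alpha> a * pair \<beta> b) r)"

definition rsharp :: "('n::finite, 'k::comm_ring_1) tensor2 \<Rightarrow> ('n \<Rightarrow> 'k) \<Rightarrow> ('n \<Rightarrow> 'k)" where
  "rsharp r \<alpha> = sum_list (map (\<lambda>(a, b). smul (pair \<alpha> a) b) r)"

definition symmetric2 :: "('n::finite, 'k::comm_ring_1) tensor2 \<Rightarrow> bool" where
  "symmetric2 r \<longleftrightarrow> (\<forall>\<alpha> \<beta>. rform r \<alpha> \<beta> = rform r \<beta> \<alpha>)"

text \<open>[r,r] in g \<otimes> g \<otimes> g, evaluated on \<alpha> \<otimes> \<beta> \<otimes> \<gamma>.\<close>
definition rr3 :: "('n::finite, 'k::comm_ring_1) prod_op \<Rightarrow> ('n, 'k) tensor2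
     \<Rightarrow> ('n \<Rightarrow> 'k) \<Rightarrow> ('n \<Rightarrow> 'k) \<Rightarrow> ('n \<Rightarrow> 'k) \<Rightarrow> 'k" where
  "rr3 m r \<alpha> \<beta> \<gamma> =
     - sum_list (map (\<lambda>(ai, bi). sum_list (map (\<lambda>(aj, bj).
          pair \<alpha> (m ai aj) * pair \<beta> bi * pair \<gamma> bj) r)) r)
     + sum_list (map (\<lambda>(ai, bi). sum_list (map (\<lambda>(aj, bj).
          pair \<alpha> ai * pair \<beta> (m bi aj) * pair \<gamma> bj) r)) r)
     + sum_list (map (\<lambda>(ai, bi). sum_list (map (\<lambda>(aj, bj).
          pair \<alpha> ai * pair \<beta> aj * pair \<gamma> (brg m bi bj)) r)) r)"

definition s_matrix :: "('n::finite, 'k::comm_ring_1) prod_op \<Rightarrow> ('n, 'k) tensor2 \<Rightarrow> bool" where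
  "s_matrix m r \<longleftrightarrow> (\<forall>\<alpha> \<beta> \<gamma>. rr3 m r \<alpha> \<beta> \<gamma> = 0)"

definition dot_r :: "('n::finite, 'k::comm_ring_1) prod_op \<Rightarrow> ('n, 'k) tensor2
     \<Rightarrow> ('n \<Rightarrow> 'k) \<Rightarrow> ('n \<Rightarrow> 'k) \<Rightarrow> ('n \<Rightarrow> 'k)" where
  "dot_r m r \<alpha> \<beta> = adstar m (rsharp r \<alpha>) \<beta> - Rstar m (rsharp r \<beta>) \<alpha>"

definition br_r :: "('n::finite, 'k::comm_ring_1) prod_op \<Rightarrow> ('n, 'k) tensor2
     \<Rightarrow> ('n \<Rightarrow> 'k) \<Rightarrow> ('n \<Rightarrow> 'k) \<Rightarrow> ('n \<Rightarrow> 'k)" where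
  "br_r m r \<alpha> \<beta> = Lstar m (rsharp r \<alpha>) \<beta> - Lstar m (rsharp r \<beta>) \<alpha>"

definition del :: "nat \<Rightarrow> 'a list \<Rightarrow> 'a list" where
  "del i xs = take i xs @ drop (Suc i) xs"

text \<open>An element of C^p_s = wedge^(p-1) g \<otimes> g is regarded as a p-linear map on g*,
alternating in the first p-1 arguments; arguments are a list of length p, and the map is 0
on lists of other lengths. An element of C^k(g*,g) is an alternating k-linear map
g* x ... x g* \<rightarrow> g, again 0 on lists of length other than k.\<close>
definition multilin_s :: "nat \<Rightarrow> (('n \<Rightarrow> 'k) list \<Rightarrow> 'k::comm_ring_1) \<Rightarrow> bool" where
  "multilin_s p \<phi> \<longleftrightarrow> (\<forall>xs ys x y c. length xs + length ys + 1 = p \<longrightarrow>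
      \<phi> (xs @ (x + y) # ys) = \<phi> (xs @ x # ys) + \<phi> (xs @ y # ys) \<and>
      \<phi> (xs @ smul c x # ys) = c * \<phi> (xs @ x # ys))"

definition multilin_v :: "nat \<Rightarrow> (('n \<Rightarrow> 'k) list \<Rightarrow> ('n \<Rightarrow> 'k::comm_ring_1)) \<Rightarrow> bool" where
  "multilin_v p P \<longleftrightarrow> (\<forall>xs ys x y c. length xs + length ys + 1 = p \<longrightarrow>
      P (xs @ (x + y) # ys) = P (xs @ x # ys) + P (xs @ y # ys) \<and>
      P (xs @ smul c x # ys) = smul c (P (xs @ x # ys)))"

definition Cs :: "nat \<Rightarrow> (('n \<Rightarrow> 'k) list \<Rightarrow> 'k::comm_ring_1) set" where
  "Cs p = {\<phi>. multilin_s p \<phi> \<and>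
     (\<forall>as i j. length as = p \<and> i < j \<and> j < p - 1 \<and> as ! i = as ! j \<longrightarrow> \<phi> as = 0) \<and>
     (\<forall>as. length as \<noteq> p \<longrightarrow> \<phi> as = 0)}"

definition CRB :: "nat \<Rightarrow> (('n \<Rightarrow> 'k) list \<Rightarrow> ('n \<Rightarrow> 'k::comm_ring_1)) set" where
  "CRB k = {P. multilin_v k P \<and>
     (\<forall>as i j. length as = k \<and> i < j \<and> j < k \<and> as ! i = as ! j \<longrightarrow> P as = 0) \<and>
     (\<forall>as. length as \<noteq> k \<longrightarrow> P as = 0)}"

text \<open>Psi : wedge^k g \<otimes> g \<rightarrow> Hom(wedge^k g*, g), characterised by
 pair (Psi phi (a_1..a_k)) a_(k+1) = phi(a_1..a_(k+1)); in coordinates, its i-th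
 component is phi(a_1,...,a_k, e_i^*).\<close>
definition Psi :: "(('n \<Rightarrow> 'k::zero_neq_one) list \<Rightarrow> 'k) \<Rightarrow> (('n \<Rightarrow> 'k) list \<Rightarrow> ('n \<Rightarrow> 'k))" where
  "Psi \<phi> = (\<lambda>as i. \<phi> (as @ [ebas i]))"

text \<open>delta_s : C^p_s \<rightarrow> C^(p+1)_s (indices shifted to 0-based).\<close>
definition delta_s :: "('n::finite, 'k::comm_ring_1) prod_op \<Rightarrow> ('n, 'k) tensor2 \<Rightarrow> nat
    \<Rightarrow> (('n \<Rightarrow> 'k) list \<Rightarrow> 'k) \<Rightarrow> (('n \<Rightarrow> 'k) list \<Rightarrow> 'k)" where
  "delta_s m r p \<phi> = (\<lambda>as. if length as = Suc p then
      - (\<Sum>i<p. (-1) ^ i * \<phi> (del i (take p as) @ [dot_r m r (as ! i) (as ! p)]))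
      + (\<Sum>i<p. \<Sum>j\<in>{i<..<p}. (-1) ^ (i + j) * \<phi> (br_r m r (as ! i) (as ! j) # del i (del j as)))
    else 0)"

text \<open>delta_RB : C^k(g*,g) \<rightarrow> C^(k+1)(g*,g) (indices shifted to 0-based).\<close>
definition delta_RB :: "('n::finite, 'k::comm_ring_1) prod_op \<Rightarrow> ('n, 'k) tensor2 \<Rightarrow> nat
    \<Rightarrow> (('n \<Rightarrow> 'k) list \<Rightarrow> ('n \<Rightarrow> 'k)) \<Rightarrow> (('n \<Rightarrow> 'k) list \<Rightarrow> ('n \<Rightarrow> 'k))" where
  "delta_RB m r k P = (\<lambda>as. if length as = Suc k then
      (\<Sum>i\<le>k. smul ((-1) ^ i) (brg m (rsharp r (as ! i)) (P (del i as))))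
      + (\<Sum>i\<le>k. smul ((-1) ^ i) (rsharp r (Lstar m (P (del i as)) (as ! i))))
      + (\<Sum>i\<le>k. \<Sum>j\<in>{i<..k}. smul ((-1) ^ (i + j)) (P (br_r m r (as ! i) (as ! j) # del i (del j as))))
    else 0)"

text \<open>Cocycles, coboundaries and cohomology (as quotient sets) of the complex
 (C^(*+1)_s, delta_s), starting in degree p = 1, and of (C^*(g*,g), delta_RB), starting in degree 0.\<close>
definition Zs :: "('n::finite, 'k::comm_ring_1) prod_op \<Rightarrow> ('n, 'k) tensor2 \<Rightarrow> nat \<Rightarrow> (('n \<Rightarrow> 'k) list \<Rightarrow> 'k) set" where
  "Zs m r p = {\<phi> \<in> Cs p. delta_s m r p \<phi> = 0}"

definition Bs :: "('n::finite, 'k::comm_ring_1) prod_op \<Rightarrow> ('n, 'k) tensor2 \<Rightarrow> nat \<Rightarrow> (('n \<Rightarrow> 'k) list \<Rightarrow> 'k) set" where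
  "Bs m r p = (if p \<le> 1 then {0} else delta_s m r (p - 1) ` Cs (p - 1))"

definition Hs :: "('n::finite, 'k::comm_ring_1) prod_op \<Rightarrow> ('n, 'k) tensor2 \<Rightarrow> nat \<Rightarrow> (('n \<Rightarrow> 'k) list \<Rightarrow> 'k) set set" where
  "Hs m r p = Zs m r p // {(\<phi>, \<psi>). \<phi> \<in> Zs m r p \<and> \<psi> \<in> Zs m r p \<and> \<phi> - \<psi> \<in> Bs m r p}"

definition ZRB :: "('n::finite, 'k::comm_ring_1) prod_op \<Rightarrow> ('n, 'k) tensor2 \<Rightarrow> nat \<Rightarrow> (('n \<Rightarrow> 'k) list \<Rightarrow> ('n \<Rightarrow> 'k)) set" where
  "ZRB m r k = {P \<in> CRB k. delta_RB m r k P = 0}"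

definition BRB :: "('n::finite, 'k::comm_ring_1) prod_op \<Rightarrow> ('n, 'k) tensor2 \<Rightarrow> nat \<Rightarrow> (('n \<Rightarrow> 'k) list \<Rightarrow> ('n \<Rightarrow> 'k)) set" where
  "BRB m r k = (if k = 0 then {0} else delta_RB m r (k - 1) ` CRB (k - 1))"

definition HRB :: "('n::finite, 'k::comm_ring_1) prod_op \<Rightarrow> ('n, 'k) tensor2 \<Rightarrow> nat \<Rightarrow> (('n \<Rightarrow> 'k) list \<Rightarrow> ('n \<Rightarrow> 'k)) set set" where
  "HRB m r k = ZRB m r k // {(P, Q). P \<in> ZRB m r k \<and> Q \<in> ZRB m r k \<and> P - Q \<in> BRB m r k}"

end

theory Submission
  imports Defs
begin

text \<open>\<open>\<Psi>\<close> curries the last argument of a cochain into a vector by means of the pairing, and it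
  is bijective because the cochains are linear in that argument. Evaluating \<open>\<delta>\<^sub>s \<phi>\<close> with last
  argument \<open>\<beta>\<close> gives \<open>\<langle>\<beta>, \<delta>\<^sub>R\<^sub>B (\<Psi> \<phi>)\<rangle>\<close> term by term: the bracket terms agree verbatim, and each
  \<open>\<cdot>\<^sub>r\<close> term splits, after moving \<open>r\<^sup>\<sharp>\<close> across the pairing by the symmetry of \<open>r\<close>, into the
  two Rota--Baxter terms.\<close>

lemma sum_fun_apply: "sum f A x = (\<Sum>i\<in>A. f i x)"
  using sum_comp_morphism[of "\<lambda>g. g x" f A] by (simp add: o_def)

lemma smul_zero_left [simp]: "smul (0::'k::comm_ring_1) x = 0"
  by (simp add: smul_def fun_eq_iff)

lemma pair_commute: "pair \<alpha> x = pair x \<alpha>"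
  by (simp add: pair_def mult.commute)

lemma pair_add_right: "pair \<alpha> (x + y) = pair \<alpha> x + pair \<alpha> y"
  by (simp add: pair_def algebra_simps sum.distrib)

lemma pair_add_left: "pair (\<alpha> + \<beta>) x = pair \<alpha> x + pair \<beta> x"
  by (simp add: pair_def algebra_simps sum.distrib)

lemma pair_diff_right: "pair \<alpha> (x - y) = pair \<alpha> x - pair \<alpha> y"
  by (simp add: pair_def algebra_simps sum_subtractf)

lemma pair_diff_left: "pair (\<alpha> - \<beta>) x = pair \<alpha> x - pair \<beta> x"
  by (simp add: pair_def algebra_simps sum_subtractf)

lemma pair_minus_right: "pair \<alpha> (- x) = - pair \<alpha> x"
  by (simp add: pair_def sum_negf)

lemma pair_smul_right: "pair \<alpha> (smul c x) = c * pair \<alpha> x"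
  by (simp add: pair_def smul_def sum_distrib_left algebra_simps)

lemma pair_smul_left: "pair (smul c \<alpha>) x = c * pair \<alpha> x"
  by (simp add: pair_def smul_def sum_distrib_left algebra_simps)

lemma pair_zero_right [simp]: "pair \<alpha> 0 = 0"
  by (simp add: pair_def)

lemma pair_sum_right: "pair \<alpha> (sum f A) = (\<Sum>i\<in>A. pair \<alpha> (f i))"
  using sum_comp_morphism[of "pair \<alpha>" f A] by (simp add: o_def pair_add_right)

lemma pair_ebas_left: "pair (ebas t) x = x t"
  by (simp add: pair_def ebas_def if_distrib[of "\<lambda>c. c * _"] cong: if_cong)

lemma vector_eq_sum_ebas: "(\<gamma>::'n::finite \<Rightarrow> 'k::comm_ring_1) = (\<Sum>t\<in>UNIV. smul (\<gamma> t) (ebas t))"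
  by (simp add: fun_eq_iff sum_fun_apply smul_def ebas_def if_distrib cong: if_cong)

lemma linear_functional_eq_pair:
  fixes f :: "('n::finite \<Rightarrow> 'k::comm_ring_1) \<Rightarrow> 'k"
  assumes add: "\<And>x y. f (x + y) = f x + f y" and hom: "\<And>c x. f (smul c x) = c * f x"
  shows "f \<gamma> = pair \<gamma> (\<lambda>t. f (ebas t))"
proof -
  have "f 0 = 0" using hom[of 0 0] by simp
  then have "f (\<Sum>t\<in>UNIV. smul (\<gamma> t) (ebas t)) = (\<Sum>t\<in>UNIV. f (smul (\<gamma> t) (ebas t)))"
    using sum_comp_morphism[of f "\<lambda>t. smul (\<gamma> t) (ebas t)" UNIV] add by (simp add: o_def)
  then show ?thesis by (simp add: hom pair_def flip: vector_eq_sum_ebas)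
qed

lemma prelie_bilinear:
  assumes "prelie m"
  shows "m (x + y) z = m x z + m y z" "m x (y + z) = m x y + m x z"
    and "m (smul c x) y = smul c (m x y)" "m x (smul c y) = smul c (m x y)"
  using assms by (simp_all add: prelie_def)

lemma pair_Lstar:
  assumes "prelie m"
  shows "pair (Lstar m y \<alpha>) x = - pair \<alpha> (m y x)"
proof -
  have "pair \<alpha> (m y x) = pair x (\<lambda>t. pair \<alpha> (m y (ebas t)))"
    by (rule linear_functional_eq_pair[where f="\<lambda>x. pair \<alpha> (m y x)"])
      (simp_all add: prelie_bilinear[OF assms] pair_add_right pair_smul_right)
  moreover have "Lstar m y \<alpha> = - (\<lambda>t. pair \<alpha> (m y (ebas t)))"
    by (simp add: Lstar_def fun_eq_iff)
  ultimately show ?thesis by (simp add: pair_commute[of _ x] pair_minus_right)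
qed

lemma pair_Rstar:
  assumes "prelie m"
  shows "pair (Rstar m y \<alpha>) x = - pair \<alpha> (m x y)"
proof -
  have "pair \<alpha> (m x y) = pair x (\<lambda>t. pair \<alpha> (m (ebas t) y))"
    by (rule linear_functional_eq_pair[where f="\<lambda>x. pair \<alpha> (m x y)"])
      (simp_all add: prelie_bilinear[OF assms] pair_add_right pair_smul_right)
  moreover have "Rstar m y \<alpha> = - (\<lambda>t. pair \<alpha> (m (ebas t) y))"
    by (simp add: Rstar_def fun_eq_iff)
  ultimately show ?thesis by (simp add: pair_commute[of _ x] pair_minus_right)
qed

lemma pair_adstar:
  assumes "prelie m"
  shows "pair (adstar m y \<beta>) x = - pair \<beta> (brg m y x)"
  using assms by (simp add: adstar_def brg_def pair_diff_left pair_diff_right pair_Lstar pair_Rstar)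

lemma pair_rsharp: "pair \<beta> (rsharp r \<gamma>) = rform r \<gamma> \<beta>"
  unfolding rsharp_def rform_def
proof (induction r)
  case (Cons ab r)
  obtain a b where "ab = (a, b)" by fastforce
  then show ?case
    unfolding list.map sum_list.Cons pair_add_right Cons.IH by (simp add: pair_smul_right mult.commute)
qed (simp add: pair_def)

text \<open>The symmetry of \<open>r\<close> moves \<open>r\<^sup>\<sharp>\<close> from one argument of the pairing to the other.\<close>
lemma pair_dot_r:
  assumes "prelie m" "symmetric2 r"
  shows "pair (dot_r m r \<alpha> \<beta>) x
    = - (pair \<beta> (brg m (rsharp r \<alpha>) x) + pair \<beta> (rsharp r (Lstar m x \<alpha>)))"
proof -
  have "pair \<beta> (rsharp r (Lstar m x \<alpha>)) = pair (Lstar m x \<alpha>) (rsharp r \<beta>)"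
    using assms(2) by (simp add: pair_rsharp symmetric2_def)
  also have "\<dots> = - pair \<alpha> (m x (rsharp r \<beta>))"
    using assms(1) by (rule pair_Lstar)
  finally show ?thesis
    unfolding dot_r_def pair_diff_left using assms(1) by (simp add: pair_adstar pair_Rstar)
qed

lemma Psi_diff: "Psi (\<phi> - \<psi>) = Psi \<phi> - Psi \<psi>"
  by (simp add: Psi_def fun_eq_iff)

lemma Psi_zero: "Psi 0 = 0"
  by (simp add: Psi_def fun_eq_iff)

lemma Cs_snoc_eq_pair:
  fixes \<phi> :: "('n::finite \<Rightarrow> 'k::comm_ring_1) list \<Rightarrow> 'k"
  assumes "\<phi> \<in> Cs (Suc k)" "length xs = k"
  shows "\<phi> (xs @ [\<gamma>]) = pair \<gamma> (Psi \<phi> xs)"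
proof -
  have "multilin_s (Suc k) \<phi>" using assms(1) by (simp add: Cs_def)
  then have "\<phi> (xs @ [x + y]) = \<phi> (xs @ [x]) + \<phi> (xs @ [y])"
    and "\<phi> (xs @ [smul c x]) = c * \<phi> (xs @ [x])" for x y c
    using assms(2) unfolding multilin_s_def by (simp_all add: spec[of _ "[]"])
  then show ?thesis
    unfolding Psi_def by (rule linear_functional_eq_pair[where f="\<lambda>x. \<phi> (xs @ [x])"])
qed

text \<open>\<open>\<delta>\<^sub>s \<phi>\<close> is known to have this property without knowing it to be alternating, which suffices
  for \<open>\<Psi>\<close> to be injective on it.\<close>
definition linear_in_last :: "nat \<Rightarrow> (('n::finite \<Rightarrow> 'k::comm_ring_1) list \<Rightarrow> 'k) \<Rightarrow> bool" where
  "linear_in_last n \<phi> \<longleftrightarrow> (\<forall>as. length as \<noteq> Suc n \<longrightarrow> \<phi> as = 0)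
     \<and> (\<forall>xs \<gamma>. length xs = n \<longrightarrow> \<phi> (xs @ [\<gamma>]) = pair \<gamma> (Psi \<phi> xs))"

lemma Cs_linear_in_last:
  fixes \<phi> :: "('n::finite \<Rightarrow> 'k::comm_ring_1) list \<Rightarrow> 'k"
  shows "\<phi> \<in> Cs (Suc k) \<Longrightarrow> linear_in_last k \<phi>"
  by (simp add: linear_in_last_def Cs_snoc_eq_pair) (simp add: Cs_def)

lemma linear_in_last_zero: "linear_in_last n 0"
  by (simp add: linear_in_last_def Psi_zero)

lemma linear_in_last_diff:
  "linear_in_last n \<phi> \<Longrightarrow> linear_in_last n \<psi> \<Longrightarrow> linear_in_last n (\<phi> - \<psi>)"
  by (simp add: linear_in_last_def Psi_diff pair_diff_right)

lemma inj_on_Psi_linear_in_last: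
  "inj_on Psi {\<phi> :: ('n::finite \<Rightarrow> 'k::comm_ring_1) list \<Rightarrow> 'k. linear_in_last n \<phi>}"
proof (rule inj_onI, rule ext)
  fix \<phi> \<psi> :: "('n \<Rightarrow> 'k) list \<Rightarrow> 'k" and as
  assume \<phi>: "\<phi> \<in> {\<phi>. linear_in_last n \<phi>}" and \<psi>: "\<psi> \<in> {\<phi>. linear_in_last n \<phi>}"
    and eq: "Psi \<phi> = Psi \<psi>"
  show "\<phi> as = \<psi> as"
  proof (cases "length as = Suc n")
    case True
    then obtain xs \<gamma> where "as = xs @ [\<gamma>]" "length xs = n"
      by (metis length_Suc_conv_rev length_append_singleton nat.inject)
    then show ?thesis using \<phi> \<psi> eq by (simp add: linear_in_last_def)
  next
    case False
    then show ?thesis using \<phi> \<psi> by (simp add: linear_in_last_def)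
  qed
qed

lemma Psi_eq_iff:
  "linear_in_last n \<phi> \<Longrightarrow> linear_in_last n \<psi> \<Longrightarrow> Psi \<phi> = Psi \<psi> \<longleftrightarrow> \<phi> = \<psi>"
  using inj_on_Psi_linear_in_last by (blast dest: inj_onD)

lemma Psi_in_CRB:
  fixes \<phi> :: "('n::finite \<Rightarrow> 'k::comm_ring_1) list \<Rightarrow> 'k"
  assumes "\<phi> \<in> Cs (Suc k)"
  shows "Psi \<phi> \<in> CRB k"
proof -
  have ml: "multilin_s (Suc k) \<phi>"
    and alt: "\<And>as i j. length as = Suc k \<Longrightarrow> i < j \<Longrightarrow> j < k \<Longrightarrow> as ! i = as ! j \<Longrightarrow> \<phi> as = 0"
    and len: "\<And>as. length as \<noteq> Suc k \<Longrightarrow> \<phi> as = 0"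
    using assms unfolding Cs_def by auto
  have "multilin_v k (Psi \<phi>)"
    unfolding multilin_v_def
  proof (intro allI impI conjI ext)
    fix xs ys :: "('n \<Rightarrow> 'k) list" and x y :: "'n \<Rightarrow> 'k" and c t
    assume "length xs + length ys + 1 = k"
    then have "length xs + length (ys @ [ebas t]) + 1 = Suc k" by simp
    from ml[unfolded multilin_s_def, rule_format, OF this, of x y c]
    show "Psi \<phi> (xs @ (x + y) # ys) t = (Psi \<phi> (xs @ x # ys) + Psi \<phi> (xs @ y # ys)) t"
      and "Psi \<phi> (xs @ smul c x # ys) t = smul c (Psi \<phi> (xs @ x # ys)) t"
      by (simp_all add: Psi_def smul_def)
  qed
  moreover have "Psi \<phi> as = 0" if "length as = k" "i < j" "j < k" "as ! i = as ! j" for as i j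
    using alt[of "as @ [ebas _]" i j] that by (simp add: Psi_def nth_append fun_eq_iff)
  moreover have "Psi \<phi> as = 0" if "length as \<noteq> k" for as
    using that len by (simp add: Psi_def fun_eq_iff)
  ultimately show ?thesis unfolding CRB_def by blast
qed

lemma Psi_surj:
  fixes P :: "('n::finite \<Rightarrow> 'k::comm_ring_1) list \<Rightarrow> ('n \<Rightarrow> 'k)"
  assumes "P \<in> CRB k"
  shows "\<exists>\<phi>\<in>Cs (Suc k). Psi \<phi> = P"
proof -
  have ml: "multilin_v k P"
    and alt: "\<And>as i j. length as = k \<Longrightarrow> i < j \<Longrightarrow> j < k \<Longrightarrow> as ! i = as ! j \<Longrightarrow> P as = 0"
    and len: "\<And>as. length as \<noteq> k \<Longrightarrow> P as = 0"
    using assms unfolding CRB_def by auto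
  define \<phi> :: "('n \<Rightarrow> 'k) list \<Rightarrow> 'k" where
    "\<phi> as = (if length as = Suc k then pair (last as) (P (butlast as)) else 0)" for as
  have "multilin_s (Suc k) \<phi>"
    unfolding multilin_s_def
  proof (intro allI impI)
    fix xs ys :: "('n \<Rightarrow> 'k) list" and x y :: "'n \<Rightarrow> 'k" and c
    assume l: "length xs + length ys + 1 = Suc k"
    show "\<phi> (xs @ (x + y) # ys) = \<phi> (xs @ x # ys) + \<phi> (xs @ y # ys) \<and>
          \<phi> (xs @ smul c x # ys) = c * \<phi> (xs @ x # ys)"
    proof (cases ys rule: rev_cases)
      case Nil
      then show ?thesis using l by (simp add: \<phi>_def pair_add_left pair_smul_left butlast_append)
    next
      case (snoc ys' w)
      then have "length xs + length ys' + 1 = k" using l by simp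
      from ml[unfolded multilin_v_def, rule_format, OF this, of x y c]
      show ?thesis using l snoc by (simp add: \<phi>_def butlast_append pair_add_right pair_smul_right)
    qed
  qed
  moreover have "\<phi> as = 0" if "length as = Suc k" "i < j" "j < Suc k - 1" "as ! i = as ! j" for as i j
    using alt[of "butlast as" i j] that by (simp add: \<phi>_def nth_butlast)
  moreover have "\<phi> as = 0" if "length as \<noteq> Suc k" for as
    using that by (simp add: \<phi>_def)
  moreover have "Psi \<phi> = P"
    by (intro ext) (auto simp: Psi_def \<phi>_def pair_ebas_left len)
  ultimately show ?thesis unfolding Cs_def by blast
qed

lemma bij_betw_Psi:
  "bij_betw Psi (Cs (Suc k) :: (('n::finite \<Rightarrow> 'k::comm_ring_1) list \<Rightarrow> 'k) set) (CRB k)"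
    (is "bij_betw Psi ?C _")
proof -
  have "?C \<subseteq> {\<phi>. linear_in_last k \<phi>}" using Cs_linear_in_last by blast
  then have "inj_on Psi ?C" by (rule inj_on_subset[OF inj_on_Psi_linear_in_last])
  moreover have "Psi ` ?C = CRB k"
    using Psi_in_CRB Psi_surj by fastforce
  ultimately show ?thesis by (simp add: bij_betw_def)
qed

lemma length_del: "i < length xs \<Longrightarrow> length (del i xs) = length xs - 1"
  by (simp add: del_def)

lemma del_snoc: "i < length xs \<Longrightarrow> del i (xs @ [\<beta>]) = del i xs @ [\<beta>]"
  by (simp add: del_def)

text \<open>The \<open>i\<close>-th \<open>\<cdot>\<^sub>r\<close> term of \<open>\<delta>\<^sub>s\<close> yields the \<open>i\<close>-th terms of both Rota--Baxter sums
  (\<open>pair_dot_r\<close>); the bracket terms match directly.\<close>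
lemma delta_s_snoc:
  fixes \<phi> :: "('n::finite \<Rightarrow> 'k::field) list \<Rightarrow> 'k"
  assumes pl: "prelie m" and sy: "symmetric2 r" and \<phi>: "\<phi> \<in> Cs (Suc k)"
    and len: "length xs = Suc k"
  shows "delta_s m r (Suc k) \<phi> (xs @ [\<beta>]) = pair \<beta> (delta_RB m r k (Psi \<phi>) xs)"
proof -
  define P where "P = Psi \<phi>"
  define a where "a i = pair \<beta> (brg m (rsharp r (xs ! i)) (P (del i xs)))
    + pair \<beta> (rsharp r (Lstar m (P (del i xs)) (xs ! i)))" for i
  define c where "c i j = pair \<beta> (P (br_r m r (xs ! i) (xs ! j) # del i (del j xs)))" for i j
  have dot_term: "\<phi> (del i xs @ [dot_r m r (xs ! i) \<beta>]) = - a i" if "i < Suc k" for i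
    using that len
    by (simp add: nth_append length_del Cs_snoc_eq_pair[OF \<phi>] pair_dot_r[OF pl sy] a_def P_def)
  have bracket_term: "\<phi> (br_r m r (xs ! i) (xs ! j) # del i (del j xs) @ [\<beta>]) = c i j"
    if "i < j" "j < Suc k" for i j
    using that len Cs_snoc_eq_pair[OF \<phi>, of "br_r m r (xs ! i) (xs ! j) # del i (del j xs)" \<beta>]
    by (simp add: length_del c_def P_def)
  have "{i<..<Suc k} = {i<..k}" for i by auto
  then have "delta_s m r (Suc k) \<phi> (xs @ [\<beta>])
      = (\<Sum>i\<le>k. (-1) ^ i * a i) + (\<Sum>i\<le>k. \<Sum>j\<in>{i<..k}. (-1) ^ (i + j) * c i j)"
    using len by (simp add: delta_s_def nth_append length_del del_snoc dot_term bracket_term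
        lessThan_Suc_atMost sum_negf)
  also have "\<dots> = pair \<beta> (delta_RB m r k P xs)"
    using len by (simp add: delta_RB_def pair_add_right pair_sum_right pair_smul_right
        a_def c_def distrib_left sum.distrib)
  finally show ?thesis by (simp add: P_def)
qed

lemma Psi_delta_s:
  fixes \<phi> :: "('n::finite \<Rightarrow> 'k::field) list \<Rightarrow> 'k"
  assumes "prelie m" "symmetric2 r" "\<phi> \<in> Cs (Suc k)"
  shows "Psi (delta_s m r (Suc k) \<phi>) = delta_RB m r k (Psi \<phi>)"
proof (intro ext)
  fix as :: "('n \<Rightarrow> 'k) list" and t
  show "Psi (delta_s m r (Suc k) \<phi>) as t = delta_RB m r k (Psi \<phi>) as t"
  proof (cases "length as = Suc k")
    case True
    then show ?thesis using delta_s_snoc[OF assms True, of "ebas t"] by (simp add: Psi_def pair_ebas_left)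
  next
    case False
    then show ?thesis by (simp add: Psi_def delta_s_def delta_RB_def)
  qed
qed

lemma delta_s_linear_in_last:
  fixes \<phi> :: "('n::finite \<Rightarrow> 'k::field) list \<Rightarrow> 'k"
  assumes "prelie m" "symmetric2 r" "\<phi> \<in> Cs (Suc k)"
  shows "linear_in_last (Suc k) (delta_s m r (Suc k) \<phi>)"
  unfolding linear_in_last_def Psi_delta_s[OF assms]
proof (intro conjI allI impI)
  show "delta_s m r (Suc k) \<phi> as = 0" if "length as \<noteq> Suc (Suc k)" for as
    using that by (simp add: delta_s_def)
qed (rule delta_s_snoc[OF assms])

lemma bij_betw_Psi_cocycles:
  fixes m :: "('n::finite, 'k::field) prod_op"
  assumes "prelie m" "symmetric2 r"
  shows "bij_betw Psi (Zs m r (Suc k)) (ZRB m r k)"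
  unfolding Zs_def ZRB_def
proof (rule bij_betw_Collect[OF bij_betw_Psi])
  fix \<phi> :: "('n \<Rightarrow> 'k) list \<Rightarrow> 'k" assume \<phi>: "\<phi> \<in> Cs (Suc k)"
  have "delta_RB m r k (Psi \<phi>) = 0 \<longleftrightarrow> Psi (delta_s m r (Suc k) \<phi>) = Psi 0"
    by (simp add: Psi_delta_s[OF assms \<phi>] Psi_zero)
  also have "\<dots> \<longleftrightarrow> delta_s m r (Suc k) \<phi> = 0"
    by (rule Psi_eq_iff[OF delta_s_linear_in_last[OF assms \<phi>] linear_in_last_zero])
  finally show "delta_RB m r k (Psi \<phi>) = 0 \<longleftrightarrow> delta_s m r (Suc k) \<phi> = 0" .
qed

lemma Psi_coboundary_iff:
  fixes m :: "('n::finite, 'k::field) prod_op"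
  assumes pl: "prelie m" and sy: "symmetric2 r"
    and \<phi>: "\<phi> \<in> Cs (Suc k)" and \<psi>: "\<psi> \<in> Cs (Suc k)"
  shows "\<phi> - \<psi> \<in> Bs m r (Suc k) \<longleftrightarrow> Psi \<phi> - Psi \<psi> \<in> BRB m r k"
proof -
  have Psi_eq: "Psi \<phi> - Psi \<psi> = Psi \<chi> \<longleftrightarrow> \<phi> - \<psi> = \<chi>" if "linear_in_last k \<chi>" for \<chi>
    using Psi_eq_iff[OF linear_in_last_diff[OF \<phi>[THEN Cs_linear_in_last] \<psi>[THEN Cs_linear_in_last]] that]
    by (simp add: Psi_diff)
  show ?thesis
  proof (cases k)
    case 0
    then show ?thesis using Psi_eq[OF linear_in_last_zero] by (simp add: Bs_def BRB_def Psi_zero)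
  next
    case (Suc k')
    have "\<phi> - \<psi> \<in> Bs m r (Suc k) \<longleftrightarrow> (\<exists>\<chi>\<in>Cs (Suc k'). \<phi> - \<psi> = delta_s m r (Suc k') \<chi>)"
      using Suc by (auto simp: Bs_def)
    also have "\<dots> \<longleftrightarrow> (\<exists>\<chi>\<in>Cs (Suc k'). Psi \<phi> - Psi \<psi> = delta_RB m r k' (Psi \<chi>))"
    proof (rule bex_cong[OF refl])
      fix \<chi> :: "('n \<Rightarrow> 'k) list \<Rightarrow> 'k" assume \<chi>: "\<chi> \<in> Cs (Suc k')"
      show "\<phi> - \<psi> = delta_s m r (Suc k') \<chi> \<longleftrightarrow> Psi \<phi> - Psi \<psi> = delta_RB m r k' (Psi \<chi>)"
        using Psi_eq[of "delta_s m r (Suc k') \<chi>"] delta_s_linear_in_last[OF pl sy \<chi>] Suc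
        by (simp add: Psi_delta_s[OF pl sy \<chi>])
    qed
    also have "\<dots> \<longleftrightarrow> Psi \<phi> - Psi \<psi> \<in> BRB m r k"
      using Suc by (simp add: BRB_def image_image image_iff flip: bij_betw_imp_surj_on[OF bij_betw_Psi])
    finally show ?thesis .
  qed
qed

lemma bij_betw_image_quotient:
  assumes bij: "bij_betw f A B"
    and rel: "\<And>x y. x \<in> A \<Longrightarrow> y \<in> A \<Longrightarrow> R x y \<longleftrightarrow> S (f x) (f y)"
  shows "bij_betw (image f) (A // {(x, y). x \<in> A \<and> y \<in> A \<and> R x y})
    (B // {(u, v). u \<in> B \<and> v \<in> B \<and> S u v})"
proof -
  let ?R = "{(x, y). x \<in> A \<and> y \<in> A \<and> R x y}"
  let ?S = "{(u, v). u \<in> B \<and> v \<in> B \<and> S u v}"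
  have inj: "inj_on f A" and img: "f ` A = B" using bij by (auto simp: bij_betw_def)
  have class_image: "f ` (?R `` {x}) = ?S `` {f x}" if "x \<in> A" for x
    using that rel img by auto
  have "A // ?R \<subseteq> Pow A" unfolding quotient_def by auto
  then have inj_classes: "inj_on (image f) (A // ?R)"
    using inj_on_image_Pow[OF inj] inj_on_subset by blast
  have "image f ` (A // ?R) = (\<Union>x\<in>A. {?S `` {f x}})"
    unfolding quotient_def using class_image by auto
  also have "\<dots> = B // ?S"
    unfolding quotient_def using img by auto
  finally show ?thesis using inj_classes by (simp add: bij_betw_def)
qed

theorem proposition4p4:
  fixes m :: "('n::finite, 'k::field_char_0) prod_op"
    and r :: "('n, 'k) tensor2"
  assumes "prelie m"
    and "symmetric2 r"
    and "s_matrix m r"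
  shows "(\<forall>k. \<forall>\<phi> \<in> Cs (Suc k).
            Psi (delta_s m r (Suc k) \<phi>) = delta_RB m r k (Psi \<phi>))
       \<and> (\<forall>k. bij_betw Psi (Cs (Suc k) :: (('n \<Rightarrow> 'k) list \<Rightarrow> 'k) set) (CRB k)
            \<and> (\<forall>\<phi> \<in> (Cs (Suc k) :: (('n \<Rightarrow> 'k) list \<Rightarrow> 'k) set). \<forall>\<psi> \<in> Cs (Suc k). Psi (\<phi> + \<psi>) = Psi \<phi> + Psi \<psi>)
            \<and> (\<forall>c::'k. \<forall>\<phi> \<in> (Cs (Suc k) :: (('n \<Rightarrow> 'k) list \<Rightarrow> 'k) set). Psi (\<lambda>as. c * \<phi> as) = (\<lambda>as. smul c (Psi \<phi> as))))
       \<and> (\<forall>k. bij_betw (\<lambda>X. Psi ` X) (Hs m r (Suc k)) (HRB m r k))"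
proof (intro conjI allI ballI)
  fix k and \<phi> :: "('n \<Rightarrow> 'k) list \<Rightarrow> 'k"
  assume "\<phi> \<in> Cs (Suc k)"
  then show "Psi (delta_s m r (Suc k) \<phi>) = delta_RB m r k (Psi \<phi>)"
    by (rule Psi_delta_s[OF assms(1,2)])
next
  fix k and \<phi> \<psi> :: "('n \<Rightarrow> 'k) list \<Rightarrow> 'k" and c
  show "Psi (\<phi> + \<psi>) = Psi \<phi> + Psi \<psi>" and "Psi (\<lambda>as. c * \<phi> as) = (\<lambda>as. smul c (Psi \<phi> as))"
    by (simp_all add: Psi_def smul_def fun_eq_iff)
next
  fix k
  show "bij_betw Psi (Cs (Suc k) :: (('n \<Rightarrow> 'k) list \<Rightarrow> 'k) set) (CRB k)"
    by (rule bij_betw_Psi)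
  show "bij_betw (\<lambda>X. Psi ` X) (Hs m r (Suc k)) (HRB m r k)"
    unfolding Hs_def HRB_def
    by (rule bij_betw_image_quotient[OF bij_betw_Psi_cocycles[OF assms(1,2)]])
      (simp add: Zs_def Psi_coboundary_iff[OF assms(1,2)])
qed

end
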